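(* Let $1\le t\le k$ be integers and let $0\le\alpha<\frac{t+1}{k+1}$. Then there exists an election $(V,A,\succ)$ with $|A|\ge k$ such that no set $C\subseteq A$ with $|C|=k$ is $(t,\alpha)$-undominated.
   Context: An election $(V,A,\succ)$: finite nonempty voter set $V$ with $n=|V|$, finite candidate set $A$, and for each voter $v$ a strict linear order $\succ_v$ on $A$. For a voter $v$, a set $C\subseteq A$ with $|C|\ge t$ and $a\in A\setminus C$: $C\succ_v^t a$ iff $|\{c\in C: c\succ_v a\}|\ge t$; otherwise we write $a\succ_v^t C$. A set $C\subseteq A$ is $(t,\alpha)$-undominated if $|C|\ge t$ and for every $a\in A\setminus C$, $|\{v\in V: a\succ_v^t C\}|\le\lfloor\alpha n\rfloor$. *)

theory Defs
  imports Main Complex_Main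
begin

text \<open>An election: finite nonempty voter set V, finite candidate set A, and for each
voter v a strict linear order P v on A, where (a, b) \<in> P v means a is preferred to b by v.\<close>
definition election :: "'v set \<Rightarrow> 'c set \<Rightarrow> ('v \<Rightarrow> 'c rel) \<Rightarrow> bool" where
  "election V A P \<longleftrightarrow> finite V \<and> V \<noteq> {} \<and> finite A \<and>
     (\<forall>v\<in>V. strict_linear_order_on A (P v) \<and> P v \<subseteq> A \<times> A)"

definition t_beats :: "('v \<Rightarrow> 'c rel) \<Rightarrow> 'v \<Rightarrow> nat \<Rightarrow> 'c set \<Rightarrow> 'c \<Rightarrow> bool" where
  "t_beats P v t C a \<longleftrightarrow> t \<le> card {c \<in> C. (c, a) \<in> P v}"

definition undominated ::
  "'v set \<Rightarrow> 'c set \<Rightarrow> ('v \<Rightarrow> 'c rel) \<Rightarrow> nat \<Rightarrow> real \<Rightarrow> 'c set \<Rightarrow> bool" where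
  "undominated V A P t \<alpha> C \<longleftrightarrow> C \<subseteq> A \<and> t \<le> card C \<and>
     (\<forall>a \<in> A - C. int (card {v \<in> V. \<not> t_beats P v t C a}) \<le> \<lfloor>\<alpha> * real (card V)\<rfloor>)"

end

theory Submission
  imports Defs
begin

(* Arrange (k + 1) L candidates in k + 1 rows of length L and let every candidate also be a
   voter, who ranks the rows cyclically starting from its own row and, inside a row, the columns
   cyclically starting from its own column. For a committee C of size k, a cycle-lemma argument
   gives a row r such that, for every d \<ge> 1, the d rows from r on (cyclically) contain fewer than
   d members of C. Let j be the row t steps after r, and pick a \<notin> C in row j directly before a
   member of C if row j meets C at all. A voter in one of the rows r, ..., j whose column is not
   the one just after a ranks above a only members of C lying in these t + 1 rows, minus the one
   just after a: fewer than t. These (t + 1)(L - 1) voters outnumber \<alpha> (k + 1) L once L is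
   large, as \<alpha> < (t + 1) / (k + 1). *)

definition cdist :: "nat \<Rightarrow> nat \<Rightarrow> nat \<Rightarrow> nat" where
  "cdist M s x = (if s \<le> x then x - s else x + M - s)"

lemma cdist_less: "s < M \<Longrightarrow> x < M \<Longrightarrow> cdist M s x < M"
  by (auto simp: cdist_def)

lemma cdist_eq_iff:
  "s < M \<Longrightarrow> x < M \<Longrightarrow> x' < M \<Longrightarrow> cdist M s x = cdist M s x' \<longleftrightarrow> x = x'"
  by (auto simp: cdist_def split: if_splits)

lemma cdist_shift: "r < M \<Longrightarrow> i < M \<Longrightarrow> cdist M r ((r + i) mod M) = i"
  by (cases "r + i < M") (auto simp: cdist_def mod_if)

lemma shift_cdist: "r < M \<Longrightarrow> x < M \<Longrightarrow> (r + cdist M r x) mod M = x"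
  by (auto simp: cdist_def)

lemma cdist_triangle:
  "r < M \<Longrightarrow> s < M \<Longrightarrow> x < M \<Longrightarrow> cdist M r x \<le> cdist M r s + cdist M s x"
  by (auto simp: cdist_def)

lemma cdist_add:
  "r < M \<Longrightarrow> s < M \<Longrightarrow> x < M \<Longrightarrow> cdist M r s \<le> cdist M r x \<Longrightarrow>
    cdist M r s + cdist M s x = cdist M r x"
  by (auto simp: cdist_def split: if_splits)

lemma cdist_Suc:
  "\<theta> < M \<Longrightarrow> y < M \<Longrightarrow> \<theta> \<noteq> Suc y mod M \<Longrightarrow> cdist M \<theta> (Suc y mod M) = Suc (cdist M \<theta> y)"
  by (auto simp: cdist_def mod_Suc)

lemma card_cdist_le:
  assumes "r < M" "t < M"
  shows "card {s. s < M \<and> cdist M r s \<le> t} = Suc t"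
proof -
  have "bij_betw (cdist M r) {s. s < M \<and> cdist M r s \<le> t} {..t}"
    by (rule bij_betw_byWitness[where f' = "\<lambda>i. (r + i) mod M"])
       (use assms in \<open>auto simp: cdist_shift shift_cdist\<close>)
  then show ?thesis by (simp add: bij_betw_same_card)
qed

lemma mult_add_less_mult_add_iff:
  fixes q w q' w' L :: nat
  assumes "w < L" "w' < L"
  shows "q * L + w < q' * L + w' \<longleftrightarrow> q < q' \<or> q = q' \<and> w < w'"
proof -
  have "q * L + w < q' * L + w'" if "q < q'"
  proof -
    have "(q + 1) * L \<le> q' * L" using that by (intro mult_le_mono1) simp
    then show ?thesis using assms by (simp add: algebra_simps)
  qed
  moreover have "q' * L + w' < q * L + w" if "q' < q"
  proof -
    have "(q' + 1) * L \<le> q * L" using that by (intro mult_le_mono1) simp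
    then show ?thesis using assms by (simp add: algebra_simps)
  qed
  ultimately show ?thesis by (metis add_less_cancel_left less_asym' linorder_neqE_nat)
qed

lemma mult_add_less_mult:
  fixes q w q' L :: nat
  shows "q < q' \<Longrightarrow> w < L \<Longrightarrow> q * L + w < q' * L"
  using mult_add_less_mult_add_iff[of w L 0 q q'] by simp

lemma card_div_mod_eq:
  fixes L :: nat
  assumes "finite S" "T \<subseteq> {..<L}"
  shows "card {v. v div L \<in> S \<and> v mod L \<in> T} = card S * card T"
proof -
  have "bij_betw (\<lambda>v. (v div L, v mod L)) {v. v div L \<in> S \<and> v mod L \<in> T} (S \<times> T)"
    by (rule bij_betw_byWitness[where f' = "\<lambda>(s, \<theta>). s * L + \<theta>"]) (use assms in auto)
  then show ?thesis by (simp add: bij_betw_same_card card_cartesian_product)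
qed

lemma strict_linear_order_on_inv_image:
  assumes "inj_on f A"
  shows "strict_linear_order_on A (Restr (inv_image less_than f) A)"
  using assms unfolding strict_linear_order_on_def trans_def irrefl_def total_on_def inj_on_def
  by (auto intro: linorder_neqE_nat)

lemma exists_last_minimizer:
  fixes f :: "nat \<Rightarrow> 'b::linorder"
  assumes "0 < n"
  shows "\<exists>r<n. (\<forall>i<n. f r \<le> f i) \<and> (\<forall>i. r < i \<longrightarrow> i < n \<longrightarrow> f r < f i)"
proof -
  define S where "S = {i. i < n \<and> f i = Min (f ` {..<n})}"
  have "Min (f ` {..<n}) \<in> f ` {..<n}" using assms by (intro Min_in) auto
  then have "S \<noteq> {}" by (auto simp: S_def)
  moreover have "finite S" by (simp add: S_def)
  ultimately have "Max S \<in> S" and S_le: "\<And>i. i \<in> S \<Longrightarrow> i \<le> Max S" by auto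
  have min: "f (Max S) \<le> f i" if "i < n" for i
    using \<open>Max S \<in> S\<close> that by (simp add: S_def)
  have "f (Max S) < f i" if "Max S < i" "i < n" for i
  proof -
    have "i \<notin> S" using S_le that(1) by fastforce
    then have "f (Max S) \<noteq> f i" using \<open>Max S \<in> S\<close> that(2) by (simp add: S_def)
    then show ?thesis using min[OF that(2)] by (simp add: le_neq_trans)
  qed
  with min \<open>Max S \<in> S\<close> show ?thesis by (auto simp: S_def)
qed

lemma card_cyclic_window:
  fixes row :: "'a \<Rightarrow> nat"
  assumes fin: "finite C" and row: "\<forall>c\<in>C. row c < R" and "r < R" "d \<le> R"
  shows "card {c\<in>C. cdist R r (row c) < d} =
    (if r + d \<le> R then card {c\<in>C. r \<le> row c \<and> row c < r + d}
     else card {c\<in>C. r \<le> row c} + card {c\<in>C. row c < r + d - R})"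
proof (cases "r + d \<le> R")
  case True
  then have "{c\<in>C. cdist R r (row c) < d} = {c\<in>C. r \<le> row c \<and> row c < r + d}"
    using row by (auto simp: cdist_def)
  then show ?thesis using True by simp
next
  case False
  then have "{c\<in>C. cdist R r (row c) < d} = {c\<in>C. r \<le> row c} \<union> {c\<in>C. row c < r + d - R}"
    using row \<open>r < R\<close> by (auto simp: cdist_def)
  moreover have "{c\<in>C. r \<le> row c} \<inter> {c\<in>C. row c < r + d - R} = {}"
    using \<open>d \<le> R\<close> by auto
  ultimately show ?thesis using False fin by (simp add: card_Un_disjoint)
qed

(* Start after the last minimum of the walk i - #{c. row c < i}, which ends higher than it starts. *)
lemma exists_sparse_cyclic_start:
  fixes row :: "'a \<Rightarrow> nat"
  assumes fin: "finite C" and row: "\<forall>c\<in>C. row c < R" and card: "card C < R"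
  shows "\<exists>r<R. \<forall>d. 0 < d \<longrightarrow> d \<le> R \<longrightarrow> card {c\<in>C. cdist R r (row c) < d} < d"
proof -
  define G where "G i = card {c\<in>C. row c < i}" for i
  define H where "H i = int i - int (G i)" for i
  have G_mono: "G i \<le> G i'" if "i \<le> i'" for i i'
    unfolding G_def using that fin by (intro card_mono) auto
  have G_R: "G R = card C"
    unfolding G_def using row by (metis (no_types, lifting) Collect_cong Collect_mem_eq)
  have count_diff: "card {c\<in>C. i \<le> row c \<and> row c < i'} = G i' - G i" if "i \<le> i'" for i i'
  proof -
    have "{c\<in>C. i \<le> row c \<and> row c < i'} = {c\<in>C. row c < i'} - {c\<in>C. row c < i}"
      using that by auto
    moreover have "{c\<in>C. row c < i} \<subseteq> {c\<in>C. row c < i'}" using that by auto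
    ultimately show ?thesis unfolding G_def using fin by (simp add: card_Diff_subset)
  qed
  obtain r where "r < R" and r_min: "\<forall>i<R. H r \<le> H i"
    and r_last: "\<forall>i. r < i \<longrightarrow> i < R \<longrightarrow> H r < H i"
    using exists_last_minimizer[of R H] card by auto
  have "H r \<le> H 0" using r_min card by simp
  then have r_R: "H r < H R" using card G_R by (simp add: H_def G_def)
  have "card {c\<in>C. cdist R r (row c) < d} < d" if "0 < d" "d \<le> R" for d
  proof (cases "r + d \<le> R")
    case True
    have "H r < H (r + d)"
      using r_last r_R True \<open>0 < d\<close> by (cases "r + d = R") auto
    then show ?thesis
      using card_cyclic_window[OF fin row \<open>r < R\<close> \<open>d \<le> R\<close>] True count_diff[of r "r + d"]
        G_mono[of r "r + d"] by (simp add: H_def)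
  next
    case False
    have "{c\<in>C. r \<le> row c} = {c\<in>C. r \<le> row c \<and> row c < R}" using row by auto
    then have "card {c\<in>C. cdist R r (row c) < d} = (G R - G r) + G (r + d - R)"
      using card_cyclic_window[OF fin row \<open>r < R\<close> \<open>d \<le> R\<close>] False count_diff[of r R] \<open>r < R\<close>
      by (simp add: G_def)
    moreover have "H r \<le> H (r + d - R)" using r_min \<open>r < R\<close> \<open>d \<le> R\<close> by simp
    moreover have "G r \<le> G R" using G_mono \<open>r < R\<close> by simp
    ultimately show ?thesis using G_R card False by (simp add: H_def)
  qed
  then show ?thesis using \<open>r < R\<close> by blast
qed

lemma exists_gap_before:
  assumes D: "D \<subseteq> {..<L}" and card: "card D < L"
  shows "\<exists>y<L. y \<notin> D \<and> (D \<noteq> {} \<longrightarrow> Suc y mod L \<in> D)"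
proof (cases "D = {}")
  case True
  then show ?thesis using card by auto
next
  case False
  show ?thesis
  proof (rule ccontr)
    assume no_gap: "\<not> ?thesis"
    have "\<not> {..<L} \<subseteq> D"
      using card_mono[OF finite_subset[OF D], of "{..<L}"] card by auto
    then obtain y where y: "y < L" "y \<notin> D" by blast
    have never: "(y + n) mod L \<notin> D" for n
    proof (induction n)
      case 0
      then show ?case using y by simp
    next
      case (Suc n)
      have "(y + n) mod L < L" using y by simp
      then have "Suc ((y + n) mod L) mod L \<notin> D" using no_gap False Suc.IH by blast
      then show ?case by (simp add: mod_Suc_eq)
    qed
    obtain z where "z \<in> D" using False by blast
    moreover have "(y + (z + L - y)) mod L = z" using \<open>z \<in> D\<close> D y by auto
    ultimately show False using never[of "z + L - y"] by simp
  qed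
qed

(* Candidates and voters are both {..<R * L}; c stands for the cell (c div L, c mod L). *)
definition grid_rank :: "nat \<Rightarrow> nat \<Rightarrow> nat \<Rightarrow> nat \<Rightarrow> nat" where
  "grid_rank R L v c = cdist R (v div L) (c div L) * L + cdist L (v mod L) (c mod L)"

definition grid_pref :: "nat \<Rightarrow> nat \<Rightarrow> nat \<Rightarrow> nat rel" where
  "grid_pref R L v = Restr (inv_image less_than (grid_rank R L v)) {..<R * L}"

lemma grid_coords_less:
  fixes L :: nat
  assumes "0 < L" "c < R * L"
  shows "c div L < R" "c mod L < L"
  using assms by (simp_all add: less_mult_imp_div_less)

lemma grid_rank_div_mod:
  assumes "0 < L" "v < R * L"
  shows "grid_rank R L v c div L = cdist R (v div L) (c div L)"
    and "grid_rank R L v c mod L = cdist L (v mod L) (c mod L)"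
  using assms cdist_less[of "v mod L" L "c mod L"] by (simp_all add: grid_rank_def)

lemma grid_pref_iff:
  assumes "0 < L" "v < R * L" "c < R * L" "a < R * L"
  shows "(c, a) \<in> grid_pref R L v \<longleftrightarrow>
    cdist R (v div L) (c div L) < cdist R (v div L) (a div L) \<or>
    c div L = a div L \<and> cdist L (v mod L) (c mod L) < cdist L (v mod L) (a mod L)"
  using assms grid_coords_less[OF assms(1)]
  by (simp add: grid_pref_def grid_rank_def mult_add_less_mult_add_iff cdist_less cdist_eq_iff)

lemma grid_pref_strict_linear_order:
  assumes "0 < L" "v < R * L"
  shows "strict_linear_order_on {..<R * L} (grid_pref R L v)"
proof -
  have "inj_on (grid_rank R L v) {..<R * L}"
  proof (rule inj_onI)
    fix c c' assume "c \<in> {..<R * L}" "c' \<in> {..<R * L}" "grid_rank R L v c = grid_rank R L v c'"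
    then have "c div L = c' div L \<and> c mod L = c' mod L"
      using grid_rank_div_mod[OF assms, of c] grid_rank_div_mod[OF assms, of c']
        grid_coords_less[OF assms(1)] assms
      by (metis cdist_eq_iff lessThan_iff)
    then show "c = c'" by (metis div_mult_mod_eq)
  qed
  then show ?thesis unfolding grid_pref_def by (rule strict_linear_order_on_inv_image)
qed

lemma grid_preferred_subset:
  assumes L: "0 < L" and C: "C \<subseteq> {..<R * L}" and "t < R" "r < R"
    and j: "j = (r + t) mod R" and y: "y < L"
    and v: "v < R * L" "cdist R r (v div L) \<le> t" "v mod L \<noteq> Suc y mod L"
  shows "{c\<in>C. (c, j * L + y) \<in> grid_pref R L v}
    \<subseteq> {c\<in>C. cdist R r (c div L) < t} \<union> ({c\<in>C. c div L = j} - {j * L + Suc y mod L})"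
proof
  fix c assume "c \<in> {c\<in>C. (c, j * L + y) \<in> grid_pref R L v}"
  then have "c \<in> C" and pref: "(c, j * L + y) \<in> grid_pref R L v" by auto
  have "j < R" using \<open>r < R\<close> by (simp add: j)
  have a: "j * L + y < R * L" "(j * L + y) div L = j" "(j * L + y) mod L = y"
    using L y \<open>j < R\<close> by (simp_all add: mult_add_less_mult)
  have "c < R * L" using C \<open>c \<in> C\<close> by auto
  note v_coords = grid_coords_less[OF L v(1)] and c_coords = grid_coords_less[OF L \<open>c < R * L\<close>]
  from pref consider
      "cdist R (v div L) (c div L) < cdist R (v div L) j"
    | "c div L = j" "cdist L (v mod L) (c mod L) < cdist L (v mod L) y"
    using grid_pref_iff[OF L v(1) \<open>c < R * L\<close> a(1)] a by auto
  then show "c \<in> {c\<in>C. cdist R r (c div L) < t} \<union> ({c\<in>C. c div L = j} - {j * L + Suc y mod L})"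
  proof cases
    case 1
    have "cdist R r j = t" using \<open>r < R\<close> \<open>t < R\<close> by (simp add: j cdist_shift)
    then have "cdist R r (v div L) + cdist R (v div L) j = t"
      using cdist_add[OF \<open>r < R\<close> v_coords(1) \<open>j < R\<close>] v(2) by simp
    then have "cdist R r (c div L) < t"
      using 1 cdist_triangle[OF \<open>r < R\<close> v_coords(1) c_coords(1)] by linarith
    then show ?thesis using \<open>c \<in> C\<close> by simp
  next
    case 2
    have "cdist L (v mod L) (Suc y mod L) = Suc (cdist L (v mod L) y)"
      using cdist_Suc[OF v_coords(2) y v(3)] .
    then have "c mod L \<noteq> Suc y mod L" using 2 by auto
    then have "c \<noteq> j * L + Suc y mod L" using L by auto
    then show ?thesis using \<open>c \<in> C\<close> 2 by simp
  qed
qed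

lemma grid_few_preferred:
  assumes L: "0 < L" and C: "C \<subseteq> {..<R * L}" and "t < R" "r < R"
    and sparse: "card {c\<in>C. cdist R r (c div L) < t} < t"
      "card {c\<in>C. cdist R r (c div L) < Suc t} < Suc t"
    and j: "j = (r + t) mod R" and y: "y < L"
    and next_in_C: "\<exists>c\<in>C. c div L = j \<Longrightarrow> j * L + Suc y mod L \<in> C"
    and v: "v < R * L" "cdist R r (v div L) \<le> t" "v mod L \<noteq> Suc y mod L"
  shows "card {c\<in>C. (c, j * L + y) \<in> grid_pref R L v} < t"
proof -
  define W where "W d = {c\<in>C. cdist R r (c div L) < d}" for d
  define x where "x = j * L + Suc y mod L"
  have "finite C" using C finite_subset by blast
  then have fin: "finite (W d)" for d by (simp add: W_def)
  have "cdist R r j = t" using \<open>r < R\<close> \<open>t < R\<close> by (simp add: j cdist_shift)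
  moreover have "x div L = j" using L by (simp add: x_def)
  ultimately have x_W: "x \<in> W (Suc t) \<and> x \<notin> W t" if "x \<in> C" using that by (simp add: W_def)
  have "card (W t \<union> ({c\<in>C. c div L = j} - {x})) < t"
  proof (cases "\<exists>c\<in>C. c div L = j")
    case False
    then have "W t \<union> ({c\<in>C. c div L = j} - {x}) = W t" by blast
    then show ?thesis using sparse(1) by (simp add: W_def)
  next
    case True
    then have "x \<in> W (Suc t)" "x \<notin> W t" using next_in_C x_W by (simp_all add: x_def)
    moreover have "W t \<union> ({c\<in>C. c div L = j} - {x}) \<subseteq> W (Suc t) - {x}"
      using \<open>cdist R r j = t\<close> \<open>x \<notin> W t\<close> by (auto simp: W_def)
    ultimately have "card (W t \<union> ({c\<in>C. c div L = j} - {x})) \<le> card (W (Suc t)) - 1"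
      using fin by (metis card_Diff_singleton card_mono finite_Diff)
    moreover have "0 < card (W (Suc t))"
      using \<open>x \<in> W (Suc t)\<close> fin card_gt_0_iff by blast
    ultimately show ?thesis using sparse(2) by (simp add: W_def)
  qed
  moreover have "card {c\<in>C. (c, j * L + y) \<in> grid_pref R L v}
      \<le> card (W t \<union> ({c\<in>C. c div L = j} - {x}))"
    using grid_preferred_subset[OF L C \<open>t < R\<close> \<open>r < R\<close> j y v] \<open>finite C\<close>
    by (intro card_mono) (auto simp: W_def x_def)
  ultimately show ?thesis by linarith
qed

lemma exists_row_gap:
  assumes fin: "finite C" and "card C < L"
  obtains y where "y < L" "j * L + y \<notin> C"
    and "\<exists>c\<in>C. c div L = j \<Longrightarrow> j * L + Suc y mod L \<in> C"
proof -
  define D where "D = {x. x < L \<and> j * L + x \<in> C}"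
  have "card D \<le> card C"
    using fin by (intro card_inj_on_le[of "\<lambda>x. j * L + x"]) (auto simp: D_def)
  then obtain y where "y < L" "y \<notin> D" and gap: "D \<noteq> {} \<Longrightarrow> Suc y mod L \<in> D"
    using exists_gap_before[of D L] \<open>card C < L\<close> by (auto simp: D_def)
  moreover have "j * L + Suc y mod L \<in> C" if "\<exists>c\<in>C. c div L = j"
  proof -
    from that obtain c where "c \<in> C" "c div L = j" by blast
    then have "c mod L \<in> D" using \<open>y < L\<close> by (auto simp: D_def)
    then show ?thesis using gap by (auto simp: D_def)
  qed
  ultimately show ?thesis using that by (simp add: D_def)
qed

lemma grid_many_voters_prefer_outsider:
  assumes C: "C \<subseteq> {..<R * L}" and "card C < R" "card C < L" and t: "0 < t" "t < R"
  shows "\<exists>a \<in> {..<R * L} - C.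
    Suc t * (L - 1) \<le> card {v \<in> {..<R * L}. \<not> t_beats (grid_pref R L) v t C a}"
proof -
  have L: "0 < L" using \<open>card C < L\<close> by simp
  have fin: "finite C" using C finite_subset by blast
  obtain r where "r < R" and sparse:
    "\<And>d. 0 < d \<Longrightarrow> d \<le> R \<Longrightarrow> card {c\<in>C. cdist R r (c div L) < d} < d"
    using exists_sparse_cyclic_start[OF fin _ \<open>card C < R\<close>, of "\<lambda>c. c div L"]
      C grid_coords_less[OF L] by auto
  define j where "j = (r + t) mod R"
  obtain y where "y < L" "j * L + y \<notin> C"
    and next_in_C: "\<exists>c\<in>C. c div L = j \<Longrightarrow> j * L + Suc y mod L \<in> C"
    using exists_row_gap[OF fin \<open>card C < L\<close>] by blast
  define voters where
    "voters = {v. v div L \<in> {s. s < R \<and> cdist R r s \<le> t} \<and> v mod L \<in> {..<L} - {Suc y mod L}}"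
  have "card voters = card {s. s < R \<and> cdist R r s \<le> t} * card ({..<L} - {Suc y mod L})"
    unfolding voters_def by (rule card_div_mod_eq) auto
  also have "\<dots> = Suc t * (L - 1)"
    using \<open>r < R\<close> t L by (simp add: card_cdist_le)
  finally have "card voters = Suc t * (L - 1)" .
  moreover have "voters \<subseteq> {v \<in> {..<R * L}. \<not> t_beats (grid_pref R L) v t C (j * L + y)}"
  proof
    fix v assume "v \<in> voters"
    then have "v < R * L" "cdist R r (v div L) \<le> t" "v mod L \<noteq> Suc y mod L"
      using L by (auto simp: voters_def div_less_iff_less_mult)
    then have "card {c\<in>C. (c, j * L + y) \<in> grid_pref R L v} < t"
      by (intro grid_few_preferred[OF L C \<open>t < R\<close> \<open>r < R\<close> sparse sparse j_def \<open>y < L\<close> next_in_C])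
        (use t in auto)
    then show "v \<in> {v \<in> {..<R * L}. \<not> t_beats (grid_pref R L) v t C (j * L + y)}"
      using \<open>v < R * L\<close> by (simp add: t_beats_def)
  qed
  then have "card voters \<le> card {v \<in> {..<R * L}. \<not> t_beats (grid_pref R L) v t C (j * L + y)}"
    by (intro card_mono) auto
  moreover have "j * L + y < R * L"
    using \<open>y < L\<close> \<open>r < R\<close> by (simp add: j_def mult_add_less_mult)
  ultimately show ?thesis using \<open>j * L + y \<notin> C\<close> by auto
qed

lemma grid_not_undominated:
  assumes "C \<subseteq> {..<R * L}" "card C < R" "card C < L" "0 < t" "t < R"
    and few: "\<alpha> * real (R * L) < real (Suc t * (L - 1))"
  shows "\<not> undominated {..<R * L} {..<R * L} (grid_pref R L) t \<alpha> C"
proof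
  assume undom: "undominated {..<R * L} {..<R * L} (grid_pref R L) t \<alpha> C"
  obtain a where "a \<in> {..<R * L} - C"
    and many: "Suc t * (L - 1) \<le> card {v \<in> {..<R * L}. \<not> t_beats (grid_pref R L) v t C a}"
    using grid_many_voters_prefer_outsider assms by blast
  have "int (card {v \<in> {..<R * L}. \<not> t_beats (grid_pref R L) v t C a})
      \<le> \<lfloor>\<alpha> * real (R * L)\<rfloor>"
    using undom \<open>a \<in> {..<R * L} - C\<close> unfolding undominated_def by auto
  then have "int (Suc t * (L - 1)) \<le> \<lfloor>\<alpha> * real (R * L)\<rfloor>" using many by linarith
  then show False using few by linarith
qed

lemma election_grid:
  assumes "0 < R" "0 < L"
  shows "election {..<R * L} {..<R * L} (grid_pref R L)"
proof -
  have "{..<R * L} \<noteq> {}" using assms by (metis lessThan_iff mult_pos_pos empty_iff)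
  moreover have "strict_linear_order_on {..<R * L} (grid_pref R L v) \<and>
      grid_pref R L v \<subseteq> {..<R * L} \<times> {..<R * L}" if "v \<in> {..<R * L}" for v
    using that grid_pref_strict_linear_order[OF \<open>0 < L\<close>] by (auto simp: grid_pref_def)
  ultimately show ?thesis by (simp add: election_def)
qed

lemma exists_nat_mult_less_mult_pred:
  fixes \<beta> \<gamma> :: real
  assumes "\<beta> < \<gamma>"
  shows "\<exists>L::nat. m < L \<and> \<beta> * L < \<gamma> * (real L - 1)"
proof -
  obtain n :: nat where n: "\<gamma> / (\<gamma> - \<beta>) < n" using reals_Archimedean2 by blast
  define L where "L = max n (Suc m)"
  have "\<gamma> / (\<gamma> - \<beta>) < L" using n by (simp add: L_def)
  then have "\<gamma> < real L * (\<gamma> - \<beta>)" using assms by (simp add: pos_divide_less_eq)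
  then show ?thesis by (intro exI[of _ L]) (simp add: L_def algebra_simps)
qed

theorem theorem3:
  fixes t k :: nat and \<alpha> :: real
  assumes "1 \<le> t" and "t \<le> k" and "0 \<le> \<alpha>"
    and "\<alpha> < (real t + 1) / (real k + 1)"
  shows "\<exists>(V :: nat set) (A :: nat set) (P :: nat \<Rightarrow> nat rel).
           election V A P \<and> k \<le> card A \<and>
           (\<forall>C \<subseteq> A. card C = k \<longrightarrow> \<not> undominated V A P t \<alpha> C)"
proof -
  have "\<alpha> * real (Suc k) < real (Suc t)"
    using assms(4) by (simp add: pos_less_divide_eq add.commute)
  then obtain L where "Suc k < L" and L: "\<alpha> * real (Suc k) * L < real (Suc t) * (real L - 1)"
    using exists_nat_mult_less_mult_pred by blast
  have "real (Suc t * (L - 1)) = real (Suc t) * (real L - 1)"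
    using \<open>Suc k < L\<close> by (subst of_nat_mult, subst of_nat_diff) auto
  moreover have "\<alpha> * real (Suc k * L) = \<alpha> * real (Suc k) * L" by (simp add: algebra_simps)
  ultimately have "\<alpha> * real (Suc k * L) < real (Suc t * (L - 1))" using L by linarith
  then have "\<forall>C \<subseteq> {..<Suc k * L}. card C = k \<longrightarrow>
      \<not> undominated {..<Suc k * L} {..<Suc k * L} (grid_pref (Suc k) L) t \<alpha> C"
    using grid_not_undominated[of _ "Suc k" L t \<alpha>] \<open>Suc k < L\<close> assms(1,2) by auto
  moreover have "election {..<Suc k * L} {..<Suc k * L} (grid_pref (Suc k) L)"
    using \<open>Suc k < L\<close> by (intro election_grid) auto
  moreover have "k \<le> card {..<Suc k * L}" using \<open>Suc k < L\<close> by simp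
  ultimately show ?thesis by blast
qed

end
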